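(* Let $\mathcal X$ be a compact set in a normed space (dual norm $\|\cdot\|_*$), and let $l_1,\dots,l_N$ and $v_1,\dots,v_N$ be differentiable functions on $\mathcal X$. Write $l_{1:n}=\sum_{m=1}^nl_m$ ($l_{1:0}\equiv0$). Suppose in each round $n$, $l_{1:n}$ is $\mu_{1:n}$-strongly convex for some $\mu_{1:n}>0$, $v_{n+1}$ is a (possibly nonconvex) function such that $l_{1:n}+v_{n+1}$ is convex (and $v_1$ convex), and the learner plays FTL with prediction: $x_{n}\in\operatorname{arg\,min}_{x\in\mathcal X}(l_{1:n-1}+v_n)(x)$. Then, with $x_n^\star\in\operatorname{arg\,min}_{x\in\mathcal X}l_{1:n}(x)$, $$\sum_{n=1}^N\big(l_{1:n}(x_n)-l_{1:n}(x_n^\star)\big)\le\sum_{n=1}^N\frac1{2\mu_{1:n}}\|\nabla l_n(x_n)-\nabla v_n(x_n)\|_*^2.$$ *)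

theory Defs
  imports "HOL-Analysis.Analysis"
begin

definition strongly_convex_on :: "'a::real_normed_vector set \<Rightarrow> real \<Rightarrow> ('a \<Rightarrow> real) \<Rightarrow> bool" where
  "strongly_convex_on S \<mu> f \<longleftrightarrow>
     (\<forall>x\<in>S. \<forall>y\<in>S. \<forall>t::real. 0 \<le> t \<and> t \<le> 1 \<longrightarrow>
        f (t *\<^sub>R x + (1 - t) *\<^sub>R y) \<le> t * f x + (1 - t) * f y - \<mu> / 2 * t * (1 - t) * (norm (x - y))\<^sup>2)"

definition is_argmin_on :: "'a set \<Rightarrow> ('a \<Rightarrow> real) \<Rightarrow> 'a \<Rightarrow> bool" where
  "is_argmin_on S f x \<longleftrightarrow> x \<in> S \<and> (\<forall>y\<in>S. f x \<le> f y)"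

definition cumloss :: "(nat \<Rightarrow> 'a \<Rightarrow> real) \<Rightarrow> nat \<Rightarrow> 'a \<Rightarrow> real" where
  "cumloss l n x = (\<Sum>m=1..n. l m x)"

definition dual_norm :: "('a::real_normed_vector \<Rightarrow> real) \<Rightarrow> real" where
  "dual_norm g = onorm g"

end

theory Submission
  imports Defs
begin

text \<open>
  Split \<open>l_{1:n} = f + h\<close> with \<open>f = l_{1:n-1} + v_n\<close> and \<open>h = l_n - v_n\<close>. Since \<open>x_n\<close>
  minimises \<open>f\<close>, moving from \<open>x_n\<close> towards any \<open>y\<close> increases \<open>l_{1:n}\<close> at least as much
  as \<open>h\<close>; comparing this with strong convexity along the segment and letting the step tend
  to 0 gives \<open>Dh(x_n)(y - x_n) \<le> l_{1:n}(y) - l_{1:n}(x_n) - \<mu>/2 \<parallel>y - x_n\<parallel>\<^sup>2\<close>. Maximising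
  \<open>\<parallel>Dh(x_n)\<parallel>\<^sub>* r - \<mu>/2 r\<^sup>2\<close> over \<open>r\<close> bounds the regret of round \<open>n\<close>.
  Minimality of \<open>x_n\<close> is used directly.
\<close>

lemma has_derivative_difference_quotient_at_right:
  fixes h :: "'a::real_normed_vector \<Rightarrow> real"
  assumes "(h has_derivative g) (at x)"
  shows "((\<lambda>t. (h (x + t *\<^sub>R d) - h x) / t) \<longlongrightarrow> g d) (at_right 0)"
proof -
  have line: "((\<lambda>t::real. x + t *\<^sub>R d) has_derivative (\<lambda>t. t *\<^sub>R d)) (at 0)"
    by (auto intro!: derivative_eq_intros)
  have "((\<lambda>t. h (x + t *\<^sub>R d)) has_derivative (\<lambda>t. g (t *\<^sub>R d))) (at 0)"
    using diff_chain_at[OF line] assms by (simp add: o_def)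
  moreover have "(\<lambda>t. g (t *\<^sub>R d)) = (*) (g d)"
    using linear_cmul[OF has_derivative_linear[OF assms]] by (auto simp: mult.commute)
  ultimately have "((\<lambda>t. h (x + t *\<^sub>R d)) has_field_derivative g d) (at 0)"
    by (simp add: has_field_derivative_def)
  then have "((\<lambda>t. (h (x + t *\<^sub>R d) - h x) / t) \<longlongrightarrow> g d) (at 0)"
    by (simp add: DERIV_def)
  then show ?thesis
    by (rule tendsto_mono[OF at_le, rotated]) simp
qed

lemma strongly_convex_on_segment_le:
  assumes "strongly_convex_on X \<mu> F" "x \<in> X" "y \<in> X" "0 \<le> t" "t \<le> 1"
  shows "F (x + t *\<^sub>R (y - x)) - F x \<le> t * (F y - F x - \<mu> / 2 * (1 - t) * (norm (y - x))\<^sup>2)"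
proof -
  have "x + t *\<^sub>R (y - x) = t *\<^sub>R y + (1 - t) *\<^sub>R x"
    by (simp add: algebra_simps)
  then have "F (x + t *\<^sub>R (y - x))
      \<le> t * F y + (1 - t) * F x - \<mu> / 2 * t * (1 - t) * (norm (y - x))\<^sup>2"
    using assms unfolding strongly_convex_on_def by simp
  then show ?thesis
    by (simp add: algebra_simps)
qed

lemma strongly_convex_on_deriv_le_of_min_diff:
  fixes F h :: "'a::real_normed_vector \<Rightarrow> real"
  assumes "convex X" "x \<in> X" "y \<in> X"
    and min_diff: "\<And>z. z \<in> X \<Longrightarrow> F x - h x \<le> F z - h z"
    and deriv: "(h has_derivative g) (at x)"
    and sc: "strongly_convex_on X \<mu> F"
  shows "g (y - x) \<le> F y - F x - \<mu> / 2 * (norm (y - x))\<^sup>2"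
proof -
  let ?d = "y - x"
  have "\<forall>\<^sub>F t in at_right 0.
      (h (x + t *\<^sub>R ?d) - h x) / t \<le> F y - F x - \<mu> / 2 * (1 - t) * (norm ?d)\<^sup>2"
    unfolding eventually_at_right_field
  proof (intro exI[of _ 1] conjI allI impI)
    fix t :: real
    assume "0 < t" "t < 1"
    have "x + t *\<^sub>R ?d = (1 - t) *\<^sub>R x + t *\<^sub>R y"
      by (simp add: algebra_simps)
    also have "\<dots> \<in> X"
      using convexD_alt[OF \<open>convex X\<close> \<open>x \<in> X\<close> \<open>y \<in> X\<close>] \<open>0 < t\<close> \<open>t < 1\<close> by simp
    finally have "h (x + t *\<^sub>R ?d) - h x \<le> F (x + t *\<^sub>R ?d) - F x"
      using min_diff by fastforce
    also have "\<dots> \<le> t * (F y - F x - \<mu> / 2 * (1 - t) * (norm ?d)\<^sup>2)"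
      using strongly_convex_on_segment_le[OF sc \<open>x \<in> X\<close> \<open>y \<in> X\<close>] \<open>0 < t\<close> \<open>t < 1\<close> by simp
    finally show "(h (x + t *\<^sub>R ?d) - h x) / t \<le> F y - F x - \<mu> / 2 * (1 - t) * (norm ?d)\<^sup>2"
      using \<open>0 < t\<close> by (simp add: divide_le_eq mult.commute)
  qed simp
  moreover have "((\<lambda>t. F y - F x - \<mu> / 2 * (1 - t) * (norm ?d)\<^sup>2)
      \<longlongrightarrow> F y - F x - \<mu> / 2 * (1 - 0) * (norm ?d)\<^sup>2) (at_right 0)"
    by (intro tendsto_intros)
  ultimately show ?thesis
    using tendsto_le[OF _ _ has_derivative_difference_quotient_at_right[OF deriv]] by simp
qed

lemma mult_minus_half_square_le:
  fixes a r \<mu> :: real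
  assumes "\<mu> > 0"
  shows "a * r - \<mu> / 2 * r\<^sup>2 \<le> 1 / (2 * \<mu>) * a\<^sup>2"
proof -
  have "0 \<le> (a - \<mu> * r)\<^sup>2 / (2 * \<mu>)"
    using assms by simp
  then show ?thesis
    using assms by (simp add: power2_eq_square field_simps)
qed

lemma strongly_convex_on_gap_le_onorm:
  fixes F h :: "'a::real_normed_vector \<Rightarrow> real"
  assumes "convex X" "x \<in> X" "y \<in> X"
    and "\<And>z. z \<in> X \<Longrightarrow> F x - h x \<le> F z - h z"
    and deriv: "(h has_derivative g) (at x)"
    and "strongly_convex_on X \<mu> F" "\<mu> > 0"
  shows "F x - F y \<le> 1 / (2 * \<mu>) * (onorm g)\<^sup>2"
proof -
  have "- g (y - x) \<le> onorm g * norm (y - x)"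
    using onorm[OF has_derivative_bounded_linear[OF deriv]] by (simp add: abs_le_iff)
  moreover have "g (y - x) \<le> F y - F x - \<mu> / 2 * (norm (y - x))\<^sup>2"
    using strongly_convex_on_deriv_le_of_min_diff assms by blast
  moreover have "onorm g * norm (y - x) - \<mu> / 2 * (norm (y - x))\<^sup>2 \<le> 1 / (2 * \<mu>) * (onorm g)\<^sup>2"
    using mult_minus_half_square_le \<open>\<mu> > 0\<close> by blast
  ultimately show ?thesis
    by linarith
qed

lemma cumloss_Suc: "cumloss l (Suc n) x = cumloss l n x + l (Suc n) x"
  by (simp add: cumloss_def)

theorem lemma16:
  fixes X :: "'a::real_normed_vector set"
    and l v :: "nat \<Rightarrow> 'a \<Rightarrow> real"
    and Dl Dv :: "nat \<Rightarrow> 'a \<Rightarrow> 'a \<Rightarrow> real"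
    and \<mu> :: "nat \<Rightarrow> real"
    and x xs :: "nat \<Rightarrow> 'a"
    and N :: nat
  assumes "compact X" and "convex X"
    and dl: "\<And>n y. n \<in> {1..N} \<Longrightarrow> y \<in> X \<Longrightarrow> (l n has_derivative Dl n y) (at y)"
    and dv: "\<And>n y. n \<in> {1..N} \<Longrightarrow> y \<in> X \<Longrightarrow> (v n has_derivative Dv n y) (at y)"
    and mu_pos: "\<And>n. n \<in> {1..N} \<Longrightarrow> \<mu> n > 0"
    and sc: "\<And>n. n \<in> {1..N} \<Longrightarrow> strongly_convex_on X (\<mu> n) (cumloss l n)"
    and cv: "\<And>n. n < N \<Longrightarrow> convex_on X (\<lambda>y. cumloss l n y + v (Suc n) y)"
    and play: "\<And>n. n \<in> {1..N} \<Longrightarrow> is_argmin_on X (\<lambda>y. cumloss l (n - 1) y + v n y) (x n)"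
    and opt: "\<And>n. n \<in> {1..N} \<Longrightarrow> is_argmin_on X (cumloss l n) (xs n)"
  shows "(\<Sum>n=1..N. cumloss l n (x n) - cumloss l n (xs n))
           \<le> (\<Sum>n=1..N. 1 / (2 * \<mu> n) * (dual_norm (\<lambda>h. Dl n (x n) h - Dv n (x n) h))\<^sup>2)"
proof (rule sum_mono)
  fix n
  assume n: "n \<in> {1..N}"
  then obtain k where k: "n = Suc k"
    using not0_implies_Suc by force
  have "x n \<in> X" "xs n \<in> X"
    using play[OF n] opt[OF n] by (auto simp: is_argmin_on_def)
  have min_diff: "cumloss l n (x n) - (l n (x n) - v n (x n)) \<le> cumloss l n z - (l n z - v n z)"
    if "z \<in> X" for z
    using play[OF n] that by (simp add: is_argmin_on_def k cumloss_Suc)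
  have deriv: "((\<lambda>z. l n z - v n z) has_derivative (\<lambda>h. Dl n (x n) h - Dv n (x n) h)) (at (x n))"
    using dl[OF n \<open>x n \<in> X\<close>] dv[OF n \<open>x n \<in> X\<close>] by (rule has_derivative_diff)
  show "cumloss l n (x n) - cumloss l n (xs n)
      \<le> 1 / (2 * \<mu> n) * (dual_norm (\<lambda>h. Dl n (x n) h - Dv n (x n) h))\<^sup>2"
    unfolding dual_norm_def
    by (rule strongly_convex_on_gap_le_onorm[where F = "cumloss l n" and h = "\<lambda>z. l n z - v n z",
          OF \<open>convex X\<close> \<open>x n \<in> X\<close> \<open>xs n \<in> X\<close> min_diff deriv sc[OF n] mu_pos[OF n]])
qed

end
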